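(* Let $\mathcal{M}=[0,S)\times_h\mathbb{S}^{N-1}$ be a model manifold, let $R_0\in(0,S)$, $f\in C^0([R_0,S))$, $\varphi\in C^1((R_0,S))$, $\kappa\in C^0((R_0,S))$, and for $r\in(R_0,S)$, $c\in\mathbb{R}$ let $$w(r,c)=\frac{1}{h(r)^{N-1}\int_{R_0}^r\frac{ds}{h(s)^{N-1}}}\left(c-\int_{R_0}^r\int_s^r\Big(\frac{h(t)}{h(s)}\Big)^{N-1}f(t)\,dt\,ds\right).$$ Suppose that $\varphi'(r)-w(r,\varphi(r))\ge0$ for all $r\in(R_0,S)$, and that $$h(r_2)^{N-1}\kappa(r_2)-h(r_1)^{N-1}\kappa(r_1)+\int_{r_1}^{r_2}h(t)^{N-1}f(t)\,dt\le0$$ for all $r_1,r_2\in(R_0,S)$ with $r_1<r_2$. Then for every $r_0\in(R_0,S)$ with $w(r_0,\varphi(r_0))-\kappa(r_0)=0$ we have $w(r,\varphi(r))-\kappa(r)\le0$ for all $r\in(R_0,r_0]$.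
   Context: Model manifold data: $N\ge2$, $S\in(0,+\infty]$, $h\in C^\infty([0,S))$ with $h>0$ on $(0,S)$, $h'(0)=1$, $h^{(2k)}(0)=0$ for all $k\ge0$. *)

theory Defs
  imports "HOL-Analysis.Analysis"
begin

definition domS :: "ereal \<Rightarrow> real set" where
  "domS S = {r. 0 \<le> r \<and> ereal r < S}"

text \<open>h is C-infinity on [0,S) (one-sided derivatives at 0): there is a sequence D of
  functions with D 0 = h on [0,S) and D (Suc k) the derivative of D k within [0,S).\<close>
definition smooth_on_domS :: "ereal \<Rightarrow> (real \<Rightarrow> real) \<Rightarrow> (nat \<Rightarrow> real \<Rightarrow> real) \<Rightarrow> bool" where
  "smooth_on_domS S h D \<longleftrightarrow>
     (\<forall>x\<in>domS S. D 0 x = h x) \<and>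
     (\<forall>k. \<forall>x\<in>domS S. (D k has_real_derivative D (Suc k) x) (at x within domS S))"

definition model_data :: "nat \<Rightarrow> ereal \<Rightarrow> (real \<Rightarrow> real) \<Rightarrow> bool" where
  "model_data N S h \<longleftrightarrow> N \<ge> 2 \<and> S > 0 \<and>
     (\<exists>D. smooth_on_domS S h D \<and> D 1 0 = 1 \<and> (\<forall>k. D (2 * k) 0 = 0)) \<and>
     (\<forall>r. 0 < r \<and> ereal r < S \<longrightarrow> h r > 0)"

definition model_w :: "nat \<Rightarrow> (real \<Rightarrow> real) \<Rightarrow> (real \<Rightarrow> real) \<Rightarrow> real \<Rightarrow> real \<Rightarrow> real \<Rightarrow> real" where
  "model_w N h f R0 r c =
     (c - integral {R0..r} (\<lambda>s. integral {s..r} (\<lambda>t. (h t / h s) ^ (N - 1) * f t)))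
     / (h r ^ (N - 1) * integral {R0..r} (\<lambda>s. 1 / h s ^ (N - 1)))"

end

theory Submission
  imports Defs
begin

(* Write H = h^(N-1), F r = int_R0^r H f, V r = int_R0^r 1/H (radial harmonic: H V' = 1) and
   J r = int_R0^r F/H.  Exchanging the order of integration in w gives
   H r * w(r,c) + F r = (c + J r) / V r, and along c = phi r the right-hand side has derivative
   (phi' r - w(r, phi r)) / V r >= 0.  So H w + F is nondecreasing along phi, while the flux
   hypothesis says that H kappa + F is nonincreasing; as they agree at r0, w <= kappa on (R0, r0]. *)

lemma integral_has_real_derivative_interior:
  assumes "continuous_on {a..b} g" "a < x" "x < b"
  shows "((\<lambda>u. integral {a..u} g) has_real_derivative g x) (at x)"
  using integral_has_real_derivative[of a b g x] assms by (simp add: at_within_Icc_at)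

lemma integral_tail_integral_mult:
  fixes p k :: "real \<Rightarrow> real"
  assumes p: "continuous_on {a..b} p" and k: "continuous_on {a..b} k"
  shows "integral {a..b} (\<lambda>s. integral {s..b} p * k s)
       = integral {a..b} p * integral {a..b} k - integral {a..b} (\<lambda>s. integral {a..s} p * k s)"
proof -
  have tail: "integral {s..b} p * k s = integral {a..b} p * k s - integral {a..s} p * k s"
    if "s \<in> {a..b}" for s
    using Henstock_Kurzweil_Integration.integral_combine[of a s b p] integrable_continuous_real[OF p] that
    by (simp add: left_diff_distrib[symmetric] eq_diff_eq)
  have "integral {a..b} (\<lambda>s. integral {s..b} p * k s)
      = integral {a..b} (\<lambda>s. integral {a..b} p * k s - integral {a..s} p * k s)"
    using tail by (rule integral_cong)
  also have "\<dots> = integral {a..b} (\<lambda>s. integral {a..b} p * k s) - integral {a..b} (\<lambda>s. integral {a..s} p * k s)"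
  proof (rule integral_diff)
    show "(\<lambda>s. integral {a..b} p * k s) integrable_on {a..b}"
      by (intro integrable_continuous_real continuous_on_mult continuous_on_const k)
    show "(\<lambda>s. integral {a..s} p * k s) integrable_on {a..b}"
      by (intro integrable_continuous_real continuous_on_mult k
          indefinite_integral_continuous_1 integrable_continuous_real p)
  qed
  finally show ?thesis by simp
qed

definition radial_w :: "(real \<Rightarrow> real) \<Rightarrow> (real \<Rightarrow> real) \<Rightarrow> real \<Rightarrow> real \<Rightarrow> real \<Rightarrow> real" where
  "radial_w H f a r c =
     (c - integral {a..r} (\<lambda>s. integral {s..r} (\<lambda>t. H t / H s * f t)))
     / (H r * integral {a..r} (\<lambda>s. 1 / H s))"

locale radial_weight =
  fixes H f :: "real \<Rightarrow> real" and a b :: real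
  assumes H_cont: "continuous_on {a..b} H"
    and H_pos: "\<And>t. a \<le> t \<Longrightarrow> t \<le> b \<Longrightarrow> 0 < H t"
    and f_cont: "continuous_on {a..b} f"
begin

definition mass :: "real \<Rightarrow> real" where
  "mass r = integral {a..r} (\<lambda>t. H t * f t)"

definition harmonic :: "real \<Rightarrow> real" where
  "harmonic r = integral {a..r} (\<lambda>s. 1 / H s)"

definition harmonic_mass :: "real \<Rightarrow> real" where
  "harmonic_mass r = integral {a..r} (\<lambda>s. mass s / H s)"

lemma continuous_on_inverse_H: "continuous_on {a..b} (\<lambda>s. 1 / H s)"
  using H_pos by (intro continuous_on_divide continuous_on_const H_cont) force

lemma continuous_on_source: "continuous_on {a..b} (\<lambda>t. H t * f t)"
  by (intro continuous_on_mult H_cont f_cont)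

lemma continuous_on_mass_over_H: "continuous_on {a..b} (\<lambda>s. mass s / H s)"
  unfolding mass_def using H_pos
  by (intro continuous_on_divide H_cont indefinite_integral_continuous_1
      integrable_continuous_real continuous_on_source) force

lemma harmonic_pos:
  assumes "a < r" "r \<le> b"
  shows "0 < harmonic r"
proof -
  have "continuous_on {a..r} (\<lambda>s. 1 / H s)"
    using continuous_on_subset[OF continuous_on_inverse_H] assms by auto
  then have "integral {a..r} (\<lambda>_. 0) < harmonic r"
    unfolding harmonic_def using assms H_pos
    by (intro integral_less_real) auto
  then show ?thesis by simp
qed

lemma radial_w_eq:
  assumes r: "a < r" "r \<le> b"
  shows "H r * radial_w H f a r c + mass r = (c + harmonic_mass r) / harmonic r"
proof -
  have sub: "{a..r} \<subseteq> {a..b}" using r by auto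
  have inner: "integral {s..r} (\<lambda>t. H t / H s * f t) = integral {s..r} (\<lambda>t. H t * f t) * (1 / H s)" for s
    using integral_mult_left[of "{s..r}" "\<lambda>t. H t * f t" "1 / H s"] by simp
  have "integral {a..r} (\<lambda>s. integral {s..r} (\<lambda>t. H t / H s * f t))
      = integral {a..r} (\<lambda>s. integral {s..r} (\<lambda>t. H t * f t) * (1 / H s))"
    unfolding inner ..
  also have "\<dots> = mass r * harmonic r - harmonic_mass r"
    unfolding mass_def harmonic_def harmonic_mass_def
    using integral_tail_integral_mult[of a r "\<lambda>t. H t * f t" "\<lambda>s. 1 / H s"]
      continuous_on_subset[OF continuous_on_source sub]
      continuous_on_subset[OF continuous_on_inverse_H sub]
    by simp
  finally have w: "radial_w H f a r c = (c - (mass r * harmonic r - harmonic_mass r)) / (H r * harmonic r)"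
    by (simp add: radial_w_def harmonic_def)
  have "0 < H r" "0 < harmonic r"
    using H_pos harmonic_pos r by auto
  then show ?thesis
    unfolding w by (simp add: field_simps)
qed

context
  fixes x assumes x: "a < x" "x < b"
begin

lemma has_real_derivative_harmonic: "(harmonic has_real_derivative 1 / H x) (at x)"
  unfolding harmonic_def[abs_def]
  by (rule integral_has_real_derivative_interior[OF continuous_on_inverse_H x])

lemma has_real_derivative_harmonic_mass: "(harmonic_mass has_real_derivative mass x / H x) (at x)"
  unfolding harmonic_mass_def[abs_def]
  by (rule integral_has_real_derivative_interior[OF continuous_on_mass_over_H x])

end

lemma mass_combine:
  assumes "a \<le> r" "r \<le> r'" "r' \<le> b"
  shows "mass r' = mass r + integral {r..r'} (\<lambda>t. H t * f t)"
  unfolding mass_def using assms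
  by (intro Henstock_Kurzweil_Integration.integral_combine[symmetric] integrable_continuous_real
      continuous_on_subset[OF continuous_on_source]) auto

lemma radial_w_flux_mono:
  assumes \<phi>_deriv: "\<And>x. a < x \<Longrightarrow> x < b \<Longrightarrow> (\<phi> has_real_derivative \<phi>' x) (at x)"
    and sub: "\<And>x. a < x \<Longrightarrow> x < b \<Longrightarrow> radial_w H f a x (\<phi> x) \<le> \<phi>' x"
    and r: "a < r" "r \<le> r'" "r' < b"
  shows "H r * radial_w H f a r (\<phi> r) + mass r \<le> H r' * radial_w H f a r' (\<phi> r') + mass r'"
proof -
  let ?g = "\<lambda>x. (\<phi> x + harmonic_mass x) / harmonic x"
  have "?g r \<le> ?g r'"
  proof (rule DERIV_nonneg_imp_nondecreasing[of r r' ?g, OF r(2)])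
    fix x assume "r \<le> x" "x \<le> r'"
    then have x: "a < x" "x < b" using r by auto
    define w where "w = radial_w H f a x (\<phi> x)"
    have H: "0 < H x" and V: "0 < harmonic x"
      using H_pos harmonic_pos x by auto
    have g_deriv: "(?g has_real_derivative
        ((\<phi>' x + mass x / H x) * harmonic x - (\<phi> x + harmonic_mass x) * (1 / H x))
        / (harmonic x * harmonic x)) (at x)"
      using x V by (intro DERIV_divide DERIV_add \<phi>_deriv has_real_derivative_harmonic_mass
          has_real_derivative_harmonic) auto
    have "\<phi> x + harmonic_mass x = harmonic x * (H x * w + mass x)"
      using radial_w_eq[of x "\<phi> x"] x V by (simp add: w_def field_simps)
    with H V have "((\<phi>' x + mass x / H x) * harmonic x - (\<phi> x + harmonic_mass x) * (1 / H x))
        / (harmonic x * harmonic x) = (\<phi>' x - w) / harmonic x"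
      by (simp add: field_simps)
    moreover have "0 \<le> (\<phi>' x - w) / harmonic x"
      using sub[OF x] V by (simp add: w_def)
    ultimately show "\<exists>y. (?g has_real_derivative y) (at x) \<and> 0 \<le> y"
      using g_deriv by auto
  qed
  then show ?thesis
    using radial_w_eq r by simp
qed

lemma radial_w_le_if_flux_nonincreasing:
  assumes \<phi>_deriv: "\<And>x. a < x \<Longrightarrow> x < b \<Longrightarrow> (\<phi> has_real_derivative \<phi>' x) (at x)"
    and sub: "\<And>x. a < x \<Longrightarrow> x < b \<Longrightarrow> radial_w H f a x (\<phi> x) \<le> \<phi>' x"
    and flux: "\<And>r1 r2. a < r1 \<Longrightarrow> r1 < r2 \<Longrightarrow> r2 < b \<Longrightarrow>
        H r2 * \<kappa> r2 - H r1 * \<kappa> r1 + integral {r1..r2} (\<lambda>t. H t * f t) \<le> 0"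
    and r0: "r0 < b" "radial_w H f a r0 (\<phi> r0) \<le> \<kappa> r0"
    and r: "a < r" "r \<le> r0"
  shows "radial_w H f a r (\<phi> r) \<le> \<kappa> r"
proof (cases "r = r0")
  case True
  with r0 show ?thesis by simp
next
  case False
  with r have "r < r0" by simp
  have "H r * radial_w H f a r (\<phi> r) + mass r \<le> H r0 * radial_w H f a r0 (\<phi> r0) + mass r0"
    using r r0 by (intro radial_w_flux_mono[OF \<phi>_deriv sub]) auto
  also have "\<dots> \<le> H r0 * \<kappa> r0 + mass r0"
    using r0 r H_pos[of r0] by simp
  also have "\<dots> \<le> H r * \<kappa> r + mass r"
    using flux[of r r0] mass_combine[of r r0] \<open>r < r0\<close> r r0 by simp
  finally show ?thesis
    using H_pos[of r] r r0 by simp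
qed

end

lemma model_w_eq_radial_w: "model_w N h f R0 r c = radial_w (\<lambda>t. h t ^ (N - 1)) f R0 r c"
  by (simp add: model_w_def radial_w_def power_divide)

lemma model_data_continuous_on: "model_data N S h \<Longrightarrow> continuous_on (domS S) h"
  unfolding model_data_def smooth_on_domS_def
  by (metis (no_types, lifting) DERIV_continuous continuous_on_cong continuous_on_eq_continuous_within)

lemma model_data_radial_weight:
  assumes model: "model_data N S h" and "0 < a"
    and f_cont: "continuous_on {r. a \<le> r \<and> ereal r < S} f" and "ereal b < S"
  shows "radial_weight (\<lambda>t. h t ^ (N - 1)) f a b"
proof
  have below_S: "ereal t < S" if "t \<le> b" for t
    using assms(4) that by (meson ereal_less_eq(3) order_le_less_trans)
  then have Icc_sub: "{a..b} \<subseteq> domS S" "{a..b} \<subseteq> {r. a \<le> r \<and> ereal r < S}"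
    using \<open>0 < a\<close> by (auto simp: domS_def)
  show "continuous_on {a..b} (\<lambda>t. h t ^ (N - 1))"
    using continuous_on_subset[OF model_data_continuous_on[OF model] Icc_sub(1)]
    by (intro continuous_intros)
  show "0 < h t ^ (N - 1)" if "a \<le> t" "t \<le> b" for t
    using model \<open>0 < a\<close> below_S that by (simp add: model_data_def)
  show "continuous_on {a..b} f"
    using continuous_on_subset[OF f_cont Icc_sub(2)] .
qed

theorem proposition3p4:
  fixes N :: nat and S :: ereal and h f \<phi> \<phi>' \<kappa> :: "real \<Rightarrow> real" and R0 :: real
  assumes model: "model_data N S h"
    and R0: "0 < R0" "ereal R0 < S"
    and f_cont: "continuous_on {r. R0 \<le> r \<and> ereal r < S} f"
    and \<phi>_deriv: "\<And>r. R0 < r \<Longrightarrow> ereal r < S \<Longrightarrow> (\<phi> has_real_derivative \<phi>' r) (at r)"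
    and \<phi>'_cont: "continuous_on {r. R0 < r \<and> ereal r < S} \<phi>'"
    and \<kappa>_cont: "continuous_on {r. R0 < r \<and> ereal r < S} \<kappa>"
    and sub: "\<And>r. R0 < r \<Longrightarrow> ereal r < S \<Longrightarrow> \<phi>' r - model_w N h f R0 r (\<phi> r) \<ge> 0"
    and flux: "\<And>r1 r2. R0 < r1 \<Longrightarrow> r1 < r2 \<Longrightarrow> ereal r2 < S \<Longrightarrow>
        h r2 ^ (N - 1) * \<kappa> r2 - h r1 ^ (N - 1) * \<kappa> r1
        + integral {r1..r2} (\<lambda>t. h t ^ (N - 1) * f t) \<le> 0"
  shows "\<forall>r0. R0 < r0 \<and> ereal r0 < S \<and> model_w N h f R0 r0 (\<phi> r0) - \<kappa> r0 = 0 \<longrightarrow>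
           (\<forall>r. R0 < r \<and> r \<le> r0 \<longrightarrow> model_w N h f R0 r (\<phi> r) - \<kappa> r \<le> 0)"
proof (intro allI impI)
  fix r0 r
  assume r0: "R0 < r0 \<and> ereal r0 < S \<and> model_w N h f R0 r0 (\<phi> r0) - \<kappa> r0 = 0"
    and r: "R0 < r \<and> r \<le> r0"
  obtain b where b: "r0 < b" "ereal b < S"
    using r0 ereal_dense2 by force
  have below_S: "ereal x < S" if "x \<le> b" for x
    using b that by (meson ereal_less_eq(3) order_le_less_trans)
  interpret radial_weight "\<lambda>t. h t ^ (N - 1)" f R0 b
    using model R0(1) f_cont b(2) by (rule model_data_radial_weight)
  have "radial_w (\<lambda>t. h t ^ (N - 1)) f R0 r (\<phi> r) \<le> \<kappa> r"
    by (rule radial_w_le_if_flux_nonincreasing[of \<phi> \<phi>' \<kappa> r0 r])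
      (use \<phi>_deriv sub flux r r0 b below_S in \<open>auto simp: model_w_eq_radial_w\<close>)
  then show "model_w N h f R0 r (\<phi> r) - \<kappa> r \<le> 0"
    by (simp add: model_w_eq_radial_w)
qed

end
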